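(* Let $(M,d)$ be a compact metric space, $\varphi:M\to M$ continuous, and $\{G_n\}\subset B(M)$ weakly almost additive. Then $\lim_{k\to\infty}\limsup_{n\to\infty}n^{-1}\|G_n-k^{-1}S_nG_k\|_\infty=0$.
   Context: $B(M)$: bounded Borel real functions, $\|f\|_\infty=\sup|f|$; $S_nG=\sum_{k=0}^{n-1}G\circ\varphi^k$. Weakly almost additive: there is a real sequence $\{C_n\}$ with $\lim_nn^{-1}C_n=0$ and $-C_m+G_m+G_n\circ\varphi^m\le G_{m+n}\le C_m+G_m+G_n\circ\varphi^m$ for all $m,n\ge1$. *)

theory Defs
  imports "HOL-Analysis.Analysis"
begin

definition sup_norm :: "('a \<Rightarrow> real) \<Rightarrow> real" where
  "sup_norm f = (SUP x. \<bar>f x\<bar>)"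

definition birkhoff_sum :: "('a \<Rightarrow> 'a) \<Rightarrow> nat \<Rightarrow> ('a \<Rightarrow> real) \<Rightarrow> 'a \<Rightarrow> real" where
  "birkhoff_sum \<phi> n g x = (\<Sum>k<n. g ((\<phi> ^^ k) x))"

definition weakly_almost_additive :: "('a \<Rightarrow> 'a) \<Rightarrow> (nat \<Rightarrow> 'a \<Rightarrow> real) \<Rightarrow> bool" where
  "weakly_almost_additive \<phi> G \<longleftrightarrow>
     (\<exists>C :: nat \<Rightarrow> real. (\<lambda>n. C n / real n) \<longlonglongrightarrow> 0 \<and>
        (\<forall>m n x. m \<ge> 1 \<longrightarrow> n \<ge> 1 \<longrightarrow>
           - C m + G m x + G n ((\<phi> ^^ m) x) \<le> G (m + n) x \<and>
           G (m + n) x \<le> C m + G m x + G n ((\<phi> ^^ m) x)))"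

end

theory Submission
  imports Defs
begin

(* Fix k and write n = R + Q k. For each offset j < k, almost additivity splits G (Q k) along
   the decomposition Q k = j + (Q - 1) k + (k - j), so G n differs from the sum of G k over the
   orbit points phi^(j + i k), i < Q, by at most a constant depending on k plus Q C k.
   Averaging over the k offsets reassembles the Birkhoff sum S_n G_k, which gives
   |G n - S_n G_k / k| <= 7 B_k + n C_k / k uniformly, where B_k bounds |G m| and C m for
   m <= k. Hence the limsup over n is at most
   C_k / k, which tends to 0. *)

lemma funpow_apply_add: "(f ^^ m) ((f ^^ n) x) = (f ^^ (m + n)) x"
  by (simp add: funpow_add)

lemma birkhoff_sum_add:
  "birkhoff_sum \<phi> (m + n) g x = birkhoff_sum \<phi> m g x + birkhoff_sum \<phi> n g ((\<phi> ^^ m) x)"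
  unfolding birkhoff_sum_def by (induction n) (simp_all add: funpow_apply_add add.commute)

lemma birkhoff_sum_Suc:
  "birkhoff_sum \<phi> (Suc n) g x = birkhoff_sum \<phi> n g x + g ((\<phi> ^^ n) x)"
  unfolding birkhoff_sum_def by simp

lemma birkhoff_sum_blocks:
  "birkhoff_sum \<phi> (q * k) g x = (\<Sum>j<k. birkhoff_sum (\<phi> ^^ k) q g ((\<phi> ^^ j) x))"
proof (induction q)
  case 0
  then show ?case by (simp add: birkhoff_sum_def)
next
  case (Suc q)
  have "birkhoff_sum \<phi> (Suc q * k) g x = birkhoff_sum \<phi> (q * k) g x + birkhoff_sum \<phi> k g ((\<phi> ^^ (q * k)) x)"
    using birkhoff_sum_add[of \<phi> "q * k" k] by (simp add: add.commute)
  also have "\<dots> = (\<Sum>j<k. birkhoff_sum (\<phi> ^^ k) q g ((\<phi> ^^ j) x) + g ((\<phi> ^^ (j + q * k)) x))"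
    unfolding Suc by (simp add: sum.distrib birkhoff_sum_def funpow_add add.commute)
  also have "\<dots> = (\<Sum>j<k. birkhoff_sum (\<phi> ^^ k) (Suc q) g ((\<phi> ^^ j) x))"
    by (simp add: birkhoff_sum_Suc funpow_mult funpow_apply_add mult.commute add.commute)
  finally show ?case .
qed

lemma abs_birkhoff_sum_le:
  assumes "\<And>x. \<bar>g x\<bar> \<le> B"
  shows "\<bar>birkhoff_sum \<phi> n g x\<bar> \<le> real n * B"
proof -
  have "\<bar>birkhoff_sum \<phi> n g x\<bar> \<le> (\<Sum>k<n. \<bar>g ((\<phi> ^^ k) x)\<bar>)"
    unfolding birkhoff_sum_def by (rule sum_abs)
  also have "\<dots> \<le> real (card {..<n}) * B"
    by (rule sum_bounded_above) (rule assms)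
  finally show ?thesis
    by simp
qed

lemma sup_norm_le:
  assumes "\<And>x. \<bar>f x\<bar> \<le> c"
  shows "sup_norm f \<le> c"
  unfolding sup_norm_def by (rule cSUP_least) (use assms in auto)

lemma sup_norm_nonneg:
  assumes "\<And>x. \<bar>f x\<bar> \<le> c"
  shows "0 \<le> sup_norm f"
proof -
  have "bdd_above (range (\<lambda>x. \<bar>f x\<bar>))"
    using assms by (intro bdd_aboveI[of _ c]) auto
  then have "\<bar>f undefined\<bar> \<le> sup_norm f"
    unfolding sup_norm_def by (rule cSUP_upper[rotated]) simp
  then show ?thesis by linarith
qed

(* The defect bound is required for all m and n, including 0; weak almost additivity gives
   it after setting G 0 = 0 and replacing C by its absolute value. *)
locale almost_additive =
  fixes \<phi> :: "'a \<Rightarrow> 'a" and G :: "nat \<Rightarrow> 'a \<Rightarrow> real" and C :: "nat \<Rightarrow> real"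
  assumes defect: "\<bar>G (m + n) x - G m x - G n ((\<phi> ^^ m) x)\<bar> \<le> C m"
begin

lemma defect_nonneg: "0 \<le> C m"
  using defect[of m 0 undefined] by simp

lemma block_decomposition:
  "\<bar>G (q * k + r) y - birkhoff_sum (\<phi> ^^ k) q (G k) y - G r ((\<phi> ^^ (q * k)) y)\<bar> \<le> real q * C k"
proof (induction q arbitrary: y)
  case 0
  then show ?case by (simp add: birkhoff_sum_def)
next
  case (Suc q)
  have "\<bar>G (k + (q * k + r)) y - G k y - G (q * k + r) ((\<phi> ^^ k) y)\<bar> \<le> C k"
    by (rule defect)
  moreover have "birkhoff_sum (\<phi> ^^ k) (Suc q) (G k) y = G k y + birkhoff_sum (\<phi> ^^ k) q (G k) ((\<phi> ^^ k) y)"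
    using birkhoff_sum_add[of "\<phi> ^^ k" 1 q] by (simp add: birkhoff_sum_def)
  moreover have "(\<phi> ^^ (q * k)) ((\<phi> ^^ k) y) = (\<phi> ^^ (Suc q * k)) y"
    by (simp add: funpow_apply_add add.commute)
  ultimately show ?case
    using Suc[of "(\<phi> ^^ k) y"] by (simp add: add.assoc algebra_simps abs_le_iff)
qed

lemma offset_block_decomposition:
  assumes "j < k" and G_bound: "\<And>m x. m \<le> k \<Longrightarrow> \<bar>G m x\<bar> \<le> B" and "C j \<le> B"
  shows "\<bar>G (Q * k) y - birkhoff_sum (\<phi> ^^ k) Q (G k) ((\<phi> ^^ j) y)\<bar> \<le> 4 * B + real Q * C k"
proof (cases Q)
  case 0
  then show ?thesis
    using G_bound[of 0 y] by (simp add: birkhoff_sum_def)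
next
  case (Suc p)
  have "Q * k = j + (p * k + (k - j))"
    using Suc \<open>j < k\<close> by simp
  then have "\<bar>G (Q * k) y - G j y - G (p * k + (k - j)) ((\<phi> ^^ j) y)\<bar> \<le> C j"
    by (simp only: defect)
  moreover have "\<bar>G (p * k + (k - j)) ((\<phi> ^^ j) y) - birkhoff_sum (\<phi> ^^ k) p (G k) ((\<phi> ^^ j) y)
      - G (k - j) ((\<phi> ^^ (p * k + j)) y)\<bar> \<le> real p * C k"
    using block_decomposition[of p k "k - j" "(\<phi> ^^ j) y"] by (simp add: funpow_apply_add)
  moreover have "birkhoff_sum (\<phi> ^^ k) Q (G k) ((\<phi> ^^ j) y)
      = birkhoff_sum (\<phi> ^^ k) p (G k) ((\<phi> ^^ j) y) + G k ((\<phi> ^^ (p * k + j)) y)"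
    using Suc by (simp add: birkhoff_sum_Suc funpow_mult funpow_apply_add mult.commute)
  moreover have "real p * C k \<le> real Q * C k"
    using Suc defect_nonneg by (simp add: mult_right_mono)
  moreover have "\<bar>G j y\<bar> \<le> B" "\<bar>G (k - j) ((\<phi> ^^ (p * k + j)) y)\<bar> \<le> B"
    "\<bar>G k ((\<phi> ^^ (p * k + j)) y)\<bar> \<le> B"
    using G_bound \<open>j < k\<close> by auto
  ultimately show ?thesis
    using \<open>C j \<le> B\<close> by (simp add: abs_le_iff)
qed

lemma birkhoff_sum_multiple_defect:
  assumes G_bound: "\<And>m x. m \<le> k \<Longrightarrow> \<bar>G m x\<bar> \<le> B" and C_bound: "\<And>m. m \<le> k \<Longrightarrow> C m \<le> B"
  shows "\<bar>real k * G (Q * k) y - birkhoff_sum \<phi> (Q * k) (G k) y\<bar> \<le> real k * (4 * B + real Q * C k)"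
proof -
  have "real k * G (Q * k) y - birkhoff_sum \<phi> (Q * k) (G k) y
      = (\<Sum>j<k. G (Q * k) y - birkhoff_sum (\<phi> ^^ k) Q (G k) ((\<phi> ^^ j) y))"
    by (simp add: birkhoff_sum_blocks sum_subtractf)
  also have "\<bar>\<dots>\<bar> \<le> (\<Sum>j<k. \<bar>G (Q * k) y - birkhoff_sum (\<phi> ^^ k) Q (G k) ((\<phi> ^^ j) y)\<bar>)"
    by (rule sum_abs)
  also have "\<dots> \<le> real (card {..<k}) * (4 * B + real Q * C k)"
    by (rule sum_bounded_above) (use offset_block_decomposition G_bound C_bound in auto)
  finally show ?thesis by simp
qed

lemma birkhoff_sum_defect:
  assumes "k \<ge> 1"
    and G_bound: "\<And>m x. m \<le> k \<Longrightarrow> \<bar>G m x\<bar> \<le> B" and C_bound: "\<And>m. m \<le> k \<Longrightarrow> C m \<le> B"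
  shows "\<bar>real k * G n x - birkhoff_sum \<phi> n (G k) x\<bar> \<le> 7 * real k * B + real n * C k"
proof -
  define Q R where "Q = n div k" and "R = n mod k"
  have n: "n = R + Q * k" and "R < k"
    using \<open>k \<ge> 1\<close> by (simp_all add: Q_def R_def)
  have B: "0 \<le> B"
    using G_bound[of 0 x] by simp
  have "\<bar>G n x - G R x - G (Q * k) ((\<phi> ^^ R) x)\<bar> \<le> B"
    using defect[of R "Q * k" x] C_bound[of R] \<open>R < k\<close> n by simp
  then have "\<bar>real k * G n x - real k * G R x - real k * G (Q * k) ((\<phi> ^^ R) x)\<bar> \<le> real k * B"
    by (simp add: abs_mult mult_left_mono flip: right_diff_distrib)
  moreover have "\<bar>real k * G (Q * k) ((\<phi> ^^ R) x) - birkhoff_sum \<phi> (Q * k) (G k) ((\<phi> ^^ R) x)\<bar>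
      \<le> real k * (4 * B + real Q * C k)"
    by (rule birkhoff_sum_multiple_defect[OF G_bound C_bound])
  moreover have "birkhoff_sum \<phi> n (G k) x = birkhoff_sum \<phi> R (G k) x + birkhoff_sum \<phi> (Q * k) (G k) ((\<phi> ^^ R) x)"
    unfolding n by (rule birkhoff_sum_add)
  moreover have "\<bar>birkhoff_sum \<phi> R (G k) x\<bar> \<le> real k * B"
  proof -
    have "\<bar>birkhoff_sum \<phi> R (G k) x\<bar> \<le> real R * B"
      by (rule abs_birkhoff_sum_le) (use G_bound in auto)
    also have "\<dots> \<le> real k * B"
      using \<open>R < k\<close> B by (simp add: mult_right_mono)
    finally show ?thesis .
  qed
  moreover have "\<bar>real k * G R x\<bar> \<le> real k * B"
    using G_bound[of R x] \<open>R < k\<close> by (simp add: abs_mult mult_left_mono)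
  moreover have "real k * (real Q * C k) \<le> real n * C k"
    using n defect_nonneg[of k] by (simp add: mult_right_mono flip: mult.assoc)
  ultimately show ?thesis
    by (simp add: abs_le_iff algebra_simps)
qed

lemma birkhoff_average_defect:
  assumes "k \<ge> 1"
    and "\<And>m x. m \<le> k \<Longrightarrow> \<bar>G m x\<bar> \<le> B" and "\<And>m. m \<le> k \<Longrightarrow> C m \<le> B"
  shows "\<bar>G n x - birkhoff_sum \<phi> n (G k) x / real k\<bar> \<le> 7 * B + real n * C k / real k"
proof -
  have k: "real k > 0"
    using \<open>k \<ge> 1\<close> by simp
  have "\<bar>G n x - birkhoff_sum \<phi> n (G k) x / real k\<bar> = \<bar>real k * G n x - birkhoff_sum \<phi> n (G k) x\<bar> / real k"
    using k by (simp add: field_simps)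
  also have "\<dots> \<le> (7 * real k * B + real n * C k) / real k"
    using birkhoff_sum_defect[OF assms] k by (simp add: divide_right_mono)
  also have "\<dots> = 7 * B + real n * C k / real k"
    using k by (simp add: field_simps)
  finally show ?thesis .
qed

lemma uniform_bound_upto:
  assumes "\<And>m. m \<le> k \<Longrightarrow> bounded (range (G m))"
  obtains B where "\<And>m x. m \<le> k \<Longrightarrow> \<bar>G m x\<bar> \<le> B" and "\<And>m. m \<le> k \<Longrightarrow> C m \<le> B"
proof -
  have "bounded (\<Union>m\<le>k. range (G m))"
    using assms by auto
  then obtain B0 where B0: "\<And>m x. m \<le> k \<Longrightarrow> \<bar>G m x\<bar> \<le> B0"
    unfolding bounded_iff by fastforce
  show ?thesis
  proof
    show "\<bar>G m x\<bar> \<le> max B0 (Max (C ` {..k}))" if "m \<le> k" for m x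
      using B0[OF that, of x] by linarith
    show "C m \<le> max B0 (Max (C ` {..k}))" if "m \<le> k" for m
      using that by (simp add: le_max_iff_disj)
  qed
qed

lemma limsup_birkhoff_average_defect:
  assumes "k \<ge> 1" and "\<And>m. m \<le> k \<Longrightarrow> bounded (range (G m))"
  defines "L \<equiv> limsup (\<lambda>n. ereal (sup_norm (\<lambda>x. G n x - birkhoff_sum \<phi> n (G k) x / real k) / real n))"
  shows "0 \<le> L" and "L \<le> ereal (C k / real k)"
proof -
  obtain B where G_bound: "\<And>m x. m \<le> k \<Longrightarrow> \<bar>G m x\<bar> \<le> B" and C_bound: "\<And>m. m \<le> k \<Longrightarrow> C m \<le> B"
    using uniform_bound_upto[OF assms(2)] by blast
  have bounds: "0 \<le> sup_norm (\<lambda>x. G n x - birkhoff_sum \<phi> n (G k) x / real k) / real n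
      \<and> sup_norm (\<lambda>x. G n x - birkhoff_sum \<phi> n (G k) x / real k) / real n \<le> 7 * B / real n + C k / real k"
    if "n \<ge> 1" for n
  proof -
    have average: "\<And>x. \<bar>G n x - birkhoff_sum \<phi> n (G k) x / real k\<bar> \<le> 7 * B + real n * C k / real k"
      by (rule birkhoff_average_defect[OF \<open>k \<ge> 1\<close> G_bound C_bound])
    have "sup_norm (\<lambda>x. G n x - birkhoff_sum \<phi> n (G k) x / real k) / real n
        \<le> (7 * B + real n * C k / real k) / real n"
      by (intro divide_right_mono sup_norm_le average) simp_all
    also have "\<dots> = 7 * B / real n + C k / real k"
      using \<open>n \<ge> 1\<close> by (simp add: field_simps)
    finally have "sup_norm (\<lambda>x. G n x - birkhoff_sum \<phi> n (G k) x / real k) / real n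
        \<le> 7 * B / real n + C k / real k" .
    moreover have "0 \<le> sup_norm (\<lambda>x. G n x - birkhoff_sum \<phi> n (G k) x / real k)"
      by (rule sup_norm_nonneg) (rule average)
    ultimately show ?thesis
      by simp
  qed
  have "(\<lambda>n. 7 * B / real n + C k / real k) \<longlonglongrightarrow> 0 + C k / real k"
    by (intro tendsto_add lim_const_over_n tendsto_const)
  then have "limsup (\<lambda>n. ereal (7 * B / real n + C k / real k)) = ereal (C k / real k)"
    by (intro lim_imp_Limsup tendsto_ereal) simp_all
  moreover have "L \<le> limsup (\<lambda>n. ereal (7 * B / real n + C k / real k))"
    unfolding L_def using bounds by (intro Limsup_mono eventually_sequentiallyI[of 1]) auto
  ultimately show "L \<le> ereal (C k / real k)"
    by simp
  show "0 \<le> L"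
    unfolding L_def using bounds by (intro le_Limsup eventually_sequentiallyI[of 1]) auto
qed

end

lemma weakly_almost_additive_zero_extension:
  assumes "weakly_almost_additive \<phi> G"
  obtains C where "(\<lambda>n. C n / real n) \<longlonglongrightarrow> 0"
    and "almost_additive \<phi> (\<lambda>n. if n = 0 then (\<lambda>_. 0) else G n) C"
proof -
  obtain C where lim: "(\<lambda>n. C n / real n) \<longlonglongrightarrow> 0" and
    ineq: "\<And>m n x. m \<ge> 1 \<Longrightarrow> n \<ge> 1 \<Longrightarrow>
      - C m + G m x + G n ((\<phi> ^^ m) x) \<le> G (m + n) x \<and> G (m + n) x \<le> C m + G m x + G n ((\<phi> ^^ m) x)"
    using assms unfolding weakly_almost_additive_def by blast
  have "(\<lambda>n. \<bar>C n\<bar> / real n) \<longlonglongrightarrow> 0"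
    using tendsto_rabs_zero[OF lim] by simp
  moreover have "almost_additive \<phi> (\<lambda>n. if n = 0 then (\<lambda>_. 0) else G n) (\<lambda>m. \<bar>C m\<bar>)"
  proof
    fix m n x
    show "\<bar>(if m + n = 0 then (\<lambda>_. 0) else G (m + n)) x - (if m = 0 then (\<lambda>_. 0) else G m) x
        - (if n = 0 then (\<lambda>_. 0) else G n) ((\<phi> ^^ m) x)\<bar> \<le> \<bar>C m\<bar>"
    proof (cases "m = 0 \<or> n = 0")
      case True
      then show ?thesis
        by auto
    next
      case False
      then have "\<bar>G (m + n) x - G m x - G n ((\<phi> ^^ m) x)\<bar> \<le> C m"
        using ineq[of m n x] by (simp add: abs_le_iff)
      then show ?thesis
        using False by simp
    qed
  qed
  ultimately show ?thesis
    by (rule that)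
qed

theorem lemma6p2:
  fixes \<phi> :: "'a::metric_space \<Rightarrow> 'a" and G :: "nat \<Rightarrow> 'a \<Rightarrow> real"
  assumes "compact (UNIV :: 'a set)"
    and "continuous_on UNIV \<phi>"
    and "\<And>n. n \<ge> 1 \<Longrightarrow> G n \<in> borel_measurable borel"
    and "\<And>n. n \<ge> 1 \<Longrightarrow> bounded (range (G n))"
    and "weakly_almost_additive \<phi> G"
  shows "(\<lambda>k. limsup (\<lambda>n. ereal (sup_norm (\<lambda>x. G n x - birkhoff_sum \<phi> n (G k) x / real k) / real n)))
           \<longlonglongrightarrow> 0"
proof -
  define G' where "G' = (\<lambda>n. if n = 0 then (\<lambda>_. 0) else G n)"
  obtain C where C: "(\<lambda>n. C n / real n) \<longlonglongrightarrow> 0" and additive: "almost_additive \<phi> G' C"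
    unfolding G'_def by (rule weakly_almost_additive_zero_extension[OF assms(5)])
  interpret almost_additive \<phi> G' C
    by (fact additive)
  have bounded: "bounded (range (G' m))" for m
    using assms(4)[of m] by (cases "m = 0") (simp_all add: G'_def)
  define L where "L k = limsup (\<lambda>n. ereal (sup_norm (\<lambda>x. G n x - birkhoff_sum \<phi> n (G k) x / real k) / real n))" for k
  have L_bounds: "0 \<le> L k" "L k \<le> ereal (C k / real k)" if "k \<ge> 1" for k
  proof -
    have "L k = limsup (\<lambda>n. ereal (sup_norm (\<lambda>x. G' n x - birkhoff_sum \<phi> n (G' k) x / real k) / real n))"
      unfolding L_def using that by (intro Limsup_eq eventually_sequentiallyI[of 1]) (simp add: G'_def)
    then show "0 \<le> L k" "L k \<le> ereal (C k / real k)"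
      using limsup_birkhoff_average_defect[OF that bounded] by simp_all
  qed
  have "\<forall>\<^sub>F k in sequentially. 0 \<le> L k" "\<forall>\<^sub>F k in sequentially. L k \<le> ereal (C k / real k)"
    using L_bounds by (intro eventually_sequentiallyI[of 1]; simp)+
  moreover have "(\<lambda>k. ereal (C k / real k)) \<longlonglongrightarrow> 0"
    using C by (simp add: zero_ereal_def)
  ultimately have "L \<longlonglongrightarrow> 0"
    by (rule tendsto_sandwich[OF _ _ tendsto_const])
  then show ?thesis
    unfolding L_def .
qed

end
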